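(* For all integers $i,j,k,m\ge0$: if $\omega_i+\omega_j+\omega_k-\omega_m=0$, or $\omega_i+\omega_j-\omega_k+\omega_m=0$, or $\omega_i-\omega_j+\omega_k+\omega_m=0$, or $-\omega_i+\omega_j+\omega_k+\omega_m=0$, then $C_{ijkm}=0$.
   Context: $\omega_n=n+1$ and $C_{ijkm}=\frac2\pi\int_{-1}^1U_i(y)U_j(y)U_k(y)U_m(y)\sqrt{1-y^2}\,dy$, $U_n$ the Chebyshev polynomial of the second kind of degree $n$. *)

theory Defs
  imports "HOL-Analysis.Analysis"
begin

fun chebyU :: "nat \<Rightarrow> real \<Rightarrow> real" where
  "chebyU 0 y = 1"
| "chebyU (Suc 0) y = 2 * y"
| "chebyU (Suc (Suc n)) y = 2 * y * chebyU (Suc n) y - chebyU n y"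

definition omega :: "nat \<Rightarrow> int" where
  "omega n = int n + 1"

definition C :: "nat \<Rightarrow> nat \<Rightarrow> nat \<Rightarrow> nat \<Rightarrow> real" where
  "C i j k m = 2 / pi * integral {-1..1}
     (\<lambda>y. chebyU i y * chebyU j y * chebyU k y * chebyU m y * sqrt (1 - y\<^sup>2))"

end

theory Submission
  imports Defs
begin

text \<open>Under the substitution y = cos t, the integrand U_a U_b U_c U_n sqrt(1 - y^2) dy becomes
  (U_a U_b U_c)(cos t) sin t * sin((n+1) t) dt on [0, pi], because U_n(cos t) sin t = sin((n+1) t).
  The first factor is a sine polynomial of degree at most a + b + c + 1. If n = a + b + c + 2 this
  is below n + 1, so the integral vanishes by orthogonality of the sines on [0, pi]. Each of the
  four resonance conditions says that one index equals the sum of the other three plus two.\<close>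

inductive sine_poly :: "nat \<Rightarrow> (real \<Rightarrow> real) \<Rightarrow> bool" for N where
  zero: "sine_poly N (\<lambda>t. 0)"
| sine: "1 \<le> s \<Longrightarrow> s \<le> N \<Longrightarrow> sine_poly N (\<lambda>t. sin (real s * t))"
| add: "sine_poly N f \<Longrightarrow> sine_poly N g \<Longrightarrow> sine_poly N (\<lambda>t. f t + g t)"
| scale: "sine_poly N f \<Longrightarrow> sine_poly N (\<lambda>t. r * f t)"

lemma sine_poly_mono: "sine_poly N f \<Longrightarrow> N \<le> N' \<Longrightarrow> sine_poly N' f"
  by (induction rule: sine_poly.induct) (auto intro: sine_poly.intros)

lemma sine_poly_diff:
  assumes "sine_poly N f" "sine_poly N g"
  shows "sine_poly N (\<lambda>t. f t - g t)"
proof -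
  have "sine_poly N (\<lambda>t. f t + (-1) * g t)"
    using assms by (intro sine_poly.add sine_poly.scale)
  then show ?thesis by simp
qed

lemma sine_poly_sin: "s \<le> N \<Longrightarrow> sine_poly N (\<lambda>t. sin (real s * t))"
  by (cases "s = 0") (auto intro: sine_poly.intros)

lemma sine_poly_cos_mult: "sine_poly N f \<Longrightarrow> sine_poly (N + 1) (\<lambda>t. cos t * f t)"
proof (induction rule: sine_poly.induct)
  case zero
  then show ?case by (simp add: sine_poly.zero)
next
  case (sine s)
  have "sine_poly (N + 1) (\<lambda>t. 1/2 * sin (real (s + 1) * t) + 1/2 * sin (real (s - 1) * t))"
    using sine.hyps by (intro sine_poly.add sine_poly.scale sine_poly_sin) auto
  moreover have
    "cos t * sin (real s * t) = 1/2 * sin (real (s + 1) * t) + 1/2 * sin (real (s - 1) * t)" for t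
    using sine.hyps sin_times_cos[of "real s * t" t] by (simp add: of_nat_diff algebra_simps)
  ultimately show ?case by simp
next
  case (add f g)
  then have "sine_poly (N + 1) (\<lambda>t. cos t * f t + cos t * g t)" by (intro sine_poly.add)
  then show ?case by (simp add: distrib_left)
next
  case (scale f r)
  then have "sine_poly (N + 1) (\<lambda>t. r * (cos t * f t))" by (intro sine_poly.scale)
  then show ?case by (simp add: mult.left_commute)
qed

lemma sine_poly_chebyU_mult:
  "sine_poly N f \<Longrightarrow> sine_poly (N + a) (\<lambda>t. chebyU a (cos t) * f t)"
proof (induction a rule: induct_nat_012)
  case 0
  then show ?case by simp
next
  case 1
  then have "sine_poly (N + 1) (\<lambda>t. 2 * (cos t * f t))"
    by (intro sine_poly.scale sine_poly_cos_mult)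
  then show ?case by (simp add: mult.assoc)
next
  case (ge2 n)
  have "sine_poly (N + Suc n + 1) (\<lambda>t. 2 * (cos t * (chebyU (Suc n) (cos t) * f t)))"
    using ge2 by (intro sine_poly.scale sine_poly_cos_mult)
  moreover have "sine_poly (N + Suc n + 1) (\<lambda>t. chebyU n (cos t) * f t)"
    using ge2 by (auto elim: sine_poly_mono)
  ultimately have "sine_poly (N + Suc n + 1)
      (\<lambda>t. 2 * (cos t * (chebyU (Suc n) (cos t) * f t)) - chebyU n (cos t) * f t)"
    by (rule sine_poly_diff)
  then show ?case by (simp add: algebra_simps)
qed

lemma chebyU_cos_mult_sin: "chebyU n (cos t) * sin t = sin (real (Suc n) * t)"
proof (induction n rule: induct_nat_012)
  case (ge2 n)
  have "chebyU (Suc (Suc n)) (cos t) * sin t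
      = 2 * (sin (real (Suc (Suc n)) * t) * cos t) - sin (real (Suc n) * t)"
    using ge2 by (simp add: algebra_simps)
  also have "\<dots> = sin (real (Suc (Suc n)) * t + t) + sin (real (Suc (Suc n)) * t - t)
      - sin (real (Suc n) * t)"
    by (simp add: sin_times_cos)
  also have "\<dots> = sin (real (Suc (Suc (Suc n))) * t)"
    by (simp add: algebra_simps)
  finally show ?case .
qed (simp_all add: sin_double)

lemma sine_poly_mult_sin_antiderivative:
  assumes "sine_poly N f" "N < M"
  shows "\<exists>G. (\<forall>t. (G has_real_derivative f t * sin (real M * t)) (at t)) \<and> G 0 = 0 \<and> G pi = 0"
  using assms
proof (induction rule: sine_poly.induct)
  case zero
  then show ?case by (intro exI[of _ "\<lambda>t. 0"]) auto
next
  case (sine s)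
  define p q where "p = M - s" and "q = M + s"
  have pq: "p > 0" "q > 0" using sine by (auto simp: p_def q_def)
  define G where "G t = (sin (real p * t) / real p - sin (real q * t) / real q) / 2" for t
  have "(G has_real_derivative sin (real s * t) * sin (real M * t)) (at t)" for t
  proof -
    have "(G has_real_derivative (cos (real p * t) - cos (real q * t)) / 2) (at t)"
      unfolding G_def using pq by (auto intro!: derivative_eq_intros)
    moreover have "real p * t = real M * t - real s * t" "real q * t = real M * t + real s * t"
      using sine by (simp_all add: p_def q_def of_nat_diff algebra_simps)
    ultimately show ?thesis by (simp add: cos_add cos_diff mult.commute)
  qed
  moreover have "G 0 = 0" "G pi = 0" by (simp_all add: G_def)
  ultimately show ?case by blast
next
  case (add f g)
  then obtain F G where
    "\<forall>t. (F has_real_derivative f t * sin (real M * t)) (at t)" "F 0 = 0" "F pi = 0"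
    "\<forall>t. (G has_real_derivative g t * sin (real M * t)) (at t)" "G 0 = 0" "G pi = 0"
    by blast
  then show ?case
    by (intro exI[of _ "\<lambda>t. F t + G t"]) (auto intro!: derivative_eq_intros simp: algebra_simps)
next
  case (scale f r)
  then obtain F where
    "\<forall>t. (F has_real_derivative f t * sin (real M * t)) (at t)" "F 0 = 0" "F pi = 0"
    by blast
  then show ?case
    by (intro exI[of _ "\<lambda>t. r * F t"]) (auto intro!: derivative_eq_intros)
qed

lemma has_integral_cos_substitution:
  fixes G h :: "real \<Rightarrow> real"
  assumes "continuous_on {0..pi} G"
    and "\<And>t. 0 < t \<Longrightarrow> t < pi \<Longrightarrow> (G has_real_derivative h (cos t) * sin t) (at t)"
  shows "(h has_integral G pi - G 0) {-1..1}"
proof -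
  define F where "F y = - G (arccos y)" for y
  have "(h has_integral F 1 - F (-1)) {-1..1}"
  proof (rule fundamental_theorem_of_calculus_interior)
    show "continuous_on {-1..1} F"
      unfolding F_def using assms(1) arccos_bounded
      by (intro continuous_on_minus continuous_on_compose2[OF _ continuous_on_arccos']) auto
    fix y :: real
    assume y: "y \<in> {-1<..<1}"
    then have "(F has_real_derivative
        - (h (cos (arccos y)) * sin (arccos y) * inverse (- sqrt (1 - y\<^sup>2)))) (at y)"
      unfolding F_def using arccos_lt_bounded
      by (intro derivative_intros DERIV_chain2[OF assms(2)] DERIV_arccos) auto
    moreover have "sqrt (1 - y\<^sup>2) > 0"
      using y by (auto simp: abs_square_less_1)
    then have "- (h (cos (arccos y)) * sin (arccos y) * inverse (- sqrt (1 - y\<^sup>2))) = h y"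
      using y by (simp add: sin_arccos field_simps)
    ultimately show "(F has_vector_derivative h y) (at y)"
      by (simp add: has_real_derivative_iff_has_vector_derivative)
  qed simp
  then show ?thesis by (simp add: F_def)
qed

lemma chebyU_product_has_integral_0:
  assumes "n = a + b + c + 2"
  shows "((\<lambda>y. chebyU a y * chebyU b y * chebyU c y * chebyU n y * sqrt (1 - y\<^sup>2))
    has_integral 0) {-1..1}"
    (is "(?h has_integral 0) _")
proof -
  have "sine_poly 1 sin"
    using sine_poly_sin[of 1 1] by simp
  then have "sine_poly (1 + c + b + a)
      (\<lambda>t. chebyU a (cos t) * (chebyU b (cos t) * (chebyU c (cos t) * sin t)))"
    by (intro sine_poly_chebyU_mult)
  then obtain G where G: "\<And>t. (G has_real_derivative
      chebyU a (cos t) * (chebyU b (cos t) * (chebyU c (cos t) * sin t)) * sin (real (Suc n) * t)) (at t)"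
    "G 0 = 0" "G pi = 0"
    using sine_poly_mult_sin_antiderivative[of "1 + c + b + a" _ "Suc n"] assms by auto
  have "(G has_real_derivative ?h (cos t) * sin t) (at t)" if "0 < t" "t < pi" for t
  proof -
    have "sqrt (1 - (cos t)\<^sup>2) = sin t"
      using sin_gt_zero[OF that] by (simp add: sin_squared_eq[symmetric])
    then have "?h (cos t) * sin t
        = chebyU a (cos t) * (chebyU b (cos t) * (chebyU c (cos t) * sin t))
          * (chebyU n (cos t) * sin t)"
      by (simp add: algebra_simps)
    with G(1)[of t] show ?thesis
      by (simp only: chebyU_cos_mult_sin)
  qed
  moreover have "continuous_on {0..pi} G"
    using G(1) by (intro has_real_derivative_imp_continuous_on) blast
  ultimately have "(?h has_integral G pi - G 0) {-1..1}"
    by (intro has_integral_cos_substitution)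
  with G show ?thesis by simp
qed

lemma C_eq_0_if_resonant: "m = i + j + k + 2 \<Longrightarrow> C i j k m = 0"
  unfolding C_def using chebyU_product_has_integral_0 by (simp add: integral_unique)

lemma C_permute: "C i j k m = C j i k m" "C i j k m = C i k j m" "C i j k m = C i j m k"
  unfolding C_def by (simp_all only: mult_ac)

theorem lemma5p1:
  fixes i j k m :: nat
  assumes "omega i + omega j + omega k - omega m = 0
         \<or> omega i + omega j - omega k + omega m = 0
         \<or> omega i - omega j + omega k + omega m = 0
         \<or> - omega i + omega j + omega k + omega m = 0"
  shows "C i j k m = 0"
proof -
  from assms consider
    "m = i + j + k + 2" | "k = i + j + m + 2" | "j = i + k + m + 2" | "i = j + k + m + 2"
    unfolding omega_def by linarith
  then show ?thesis
    by cases (metis C_eq_0_if_resonant C_permute)+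
qed

end
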